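(* In the finite multi-asset market model with proportional transaction costs described in the context, the deferred solvency cones satisfy \[ \mathcal{Q}_T=\mathcal{K}_T,\qquad \mathcal{Q}_t=\mathcal{Q}_{t+1}\cap\mathcal{L}_t+\mathcal{K}_t\quad\text{for all }t=0,\ldots,T-1, \] where $\mathcal{Q}_{t+1}\cap\mathcal{L}_t$ is the set of $\mathcal{F}_t$-measurable elements of $\mathcal{Q}_{t+1}$, and the sum is the algebraic sum of subsets of $\mathcal{L}_t$.
   Context: Let $(\Omega,\mathcal{F},\mathbb{P})$ be a finite probability space with filtration $(\mathcal{F}_t)_{t=0}^T$, where $\mathcal{F}_0=\{\emptyset,\Omega\}$, $\mathcal{F}_T=\mathcal{F}=2^\Omega$ and $\mathbb{P}(\{\omega\})>0$ for all $\omega\in\Omega$. For each $t$, $\mathcal{L}_t$ denotes the set of $\mathcal{F}_t$-measurable $\mathbb{R}^d$-valued random variables. There are $d$ assets; for all $t$ and $j,k=1,\ldots,d$, the exchange rate $\pi^{jk}_t>0$ is $\mathcal{F}_t$-measurable (one unit of asset $k$ can be obtained for $\pi^{jk}_t$ units of asset $j$), with $\pi^{jj}_t=1$. The solvency cone $\mathcal{K}_t\subseteq\mathcal{L}_t$ is the set of $x\in\mathcal{L}_t$ such that, for every $\omega$, $x(\omega)$ lies in the convex cone in $\mathbb{R}^d$ generated by the canonical basis vectors $e^1,\ldots,e^d$ and the vectors $\pi^{jk}_t(\omega)e^j-e^k$, $j,k=1,\ldots,d$. The deferred solvency cone $\mathcal{Q}_t\subseteq\mathcal{L}_t$ ($t=0,\ldots,T$)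 is the set of $z\in\mathcal{L}_t$ for which there exist $y_{t+1},\ldots,y_{T+1}$ with $y_s\in\mathcal{L}_{s-1}$ for $s=t+1,\ldots,T$, $y_{T+1}=0$, $z-y_{t+1}\in\mathcal{K}_t$ and $y_s-y_{s+1}\in\mathcal{K}_s$ for all $s=t+1,\ldots,T$. Standing assumption of the paper: the model admits no arbitrage opportunity, where an arbitrage opportunity is a predictable $\mathbb{R}^d$-valued $(y_t)_{t=0}^{T+1}$ ($y_0\in\mathbb{R}^d$, $y_t\in\mathcal{L}_{t-1}$ for $t\ge1$, $y_{T+1}=0$) with $y_t-y_{t+1}\in\mathcal{K}_t$ for $t=0,\ldots,T-1$, $y_0=0$, and such that $y_T-x\in\mathcal{K}_T$ for some $x\in\mathcal{L}_T\setminus\{0\}$ with all components non-negative. *)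

theory Defs
  imports "HOL-Analysis.Analysis"
begin

text \<open>Finite sample space: the finite type 'w (Omega = UNIV).\<close>

definition Lset :: "(nat \<Rightarrow> 'w set set) \<Rightarrow> nat \<Rightarrow> ('w \<Rightarrow> real^'d) set" where
  "Lset F t = {X. \<forall>v. X -` {v} \<in> F t}"

definition solv_pt :: "('d \<Rightarrow> 'd \<Rightarrow> real) \<Rightarrow> (real^'d) set" where
  "solv_pt p = {x. \<exists>a b. (\<forall>j. a j \<ge> 0) \<and> (\<forall>j k. b j k \<ge> 0) \<and>
      x = (\<Sum>j\<in>UNIV. a j *\<^sub>R axis j 1)
        + (\<Sum>j\<in>UNIV. \<Sum>k\<in>UNIV. b j k *\<^sub>R (p j k *\<^sub>R axis j 1 - axis k 1))}"

text \<open>rate t j k w: units of asset j needed to obtain one unit of asset k at time t.\<close>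
definition Kcone :: "(nat \<Rightarrow> 'w set set) \<Rightarrow> (nat \<Rightarrow> 'd \<Rightarrow> 'd \<Rightarrow> 'w \<Rightarrow> real) \<Rightarrow> nat
    \<Rightarrow> ('w \<Rightarrow> real^'d) set" where
  "Kcone F rate t = {x \<in> Lset F t. \<forall>w. x w \<in> solv_pt (\<lambda>j k. rate t j k w)}"

definition Qcone :: "nat \<Rightarrow> (nat \<Rightarrow> 'w set set) \<Rightarrow> (nat \<Rightarrow> 'd \<Rightarrow> 'd \<Rightarrow> 'w \<Rightarrow> real) \<Rightarrow> nat
    \<Rightarrow> ('w \<Rightarrow> real^'d) set" where
  "Qcone T F rate t = {z \<in> Lset F t. \<exists>y :: nat \<Rightarrow> 'w \<Rightarrow> real^'d.
      (\<forall>s\<in>{t+1..T}. y s \<in> Lset F (s - 1)) \<and> y (T+1) = (\<lambda>w. 0) \<and>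
      (\<lambda>w. z w - y (t+1) w) \<in> Kcone F rate t \<and>
      (\<forall>s\<in>{t+1..T}. (\<lambda>w. y s w - y (s+1) w) \<in> Kcone F rate s)}"

definition arbitrage :: "nat \<Rightarrow> (nat \<Rightarrow> 'w set set) \<Rightarrow> (nat \<Rightarrow> 'd \<Rightarrow> 'd \<Rightarrow> 'w \<Rightarrow> real)
    \<Rightarrow> (nat \<Rightarrow> 'w \<Rightarrow> real^'d) \<Rightarrow> bool" where
  "arbitrage T F rate y \<longleftrightarrow>
     (\<exists>c. y 0 = (\<lambda>w. c)) \<and> (\<forall>t\<in>{1..T}. y t \<in> Lset F (t - 1)) \<and> y (T+1) = (\<lambda>w. 0) \<and>
     (\<forall>t<T. (\<lambda>w. y t w - y (t+1) w) \<in> Kcone F rate t) \<and>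
     y 0 = (\<lambda>w. 0) \<and>
     (\<exists>x \<in> Lset F T. x \<noteq> (\<lambda>w. 0) \<and> (\<forall>w i. x w $ i \<ge> 0) \<and>
        (\<lambda>w. y T w - x w) \<in> Kcone F rate T)"

end

theory Submission
  imports Defs
begin

text \<open>A deferred-solvency strategy starting at time \<open>t\<close> consists of a first trade
  \<open>z - y\<^sub>t\<^sub>+\<^sub>1 \<in> K\<^sub>t\<close> followed by a deferred-solvency strategy for \<open>y\<^sub>t\<^sub>+\<^sub>1\<close> starting at
  \<open>t + 1\<close>; since \<open>y\<^sub>t\<^sub>+\<^sub>1\<close> is \<open>\<F>\<^sub>t\<close>-measurable, splitting off (or prepending) this first
  step gives the recursion.\<close>

lemma Lset_add:
  fixes X Y :: "'w::finite \<Rightarrow> real^'d"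
  assumes "sigma_algebra UNIV (F t)" and "X \<in> Lset F t" and "Y \<in> Lset F t"
  shows "(\<lambda>w. X w + Y w) \<in> Lset F t"
  unfolding Lset_def
proof (intro CollectI allI)
  interpret sigma_algebra UNIV "F t" by fact
  fix v
  have "(\<lambda>w. X w + Y w) -` {v} = (\<Union>a\<in>range X. X -` {a} \<inter> Y -` {v - a})"
    by (auto simp: algebra_simps)
  also have "\<dots> \<in> F t"
    using assms(2,3) unfolding Lset_def by (intro finite_UN) auto
  finally show "(\<lambda>w. X w + Y w) -` {v} \<in> F t" .
qed

lemma Lset_mono: "F s \<subseteq> F t \<Longrightarrow> Lset F s \<subseteq> Lset F t"
  unfolding Lset_def by auto

lemma Kcone_subset_Lset: "Kcone F rate t \<subseteq> Lset F t"
  unfolding Kcone_def by auto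

lemma Qcone_terminal: "Qcone T F rate T = Kcone F rate T"
proof
  show "Qcone T F rate T \<subseteq> Kcone F rate T"
    unfolding Qcone_def by auto
  show "Kcone F rate T \<subseteq> Qcone T F rate T"
    using Kcone_subset_Lset[of F rate T]
    unfolding Qcone_def by (auto intro!: exI[of _ "\<lambda>_ _. 0"])
qed

lemma Qcone_split_first_trade:
  assumes "t < T" and "F t \<subseteq> F (t+1)" and "z \<in> Qcone T F rate t"
  obtains u k where "u \<in> Qcone T F rate (t+1)" "u \<in> Lset F t" "k \<in> Kcone F rate t"
    "z = (\<lambda>w. u w + k w)"
proof -
  from assms(3) obtain y where
    y_pred: "\<forall>s\<in>{t+1..T}. y s \<in> Lset F (s - 1)" and y_end: "y (T+1) = (\<lambda>w. 0)"
    and first_trade: "(\<lambda>w. z w - y (t+1) w) \<in> Kcone F rate t"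
    and later_trades: "\<forall>s\<in>{t+1..T}. (\<lambda>w. y s w - y (s+1) w) \<in> Kcone F rate s"
    unfolding Qcone_def by blast
  have u_meas: "y (t+1) \<in> Lset F t"
    using y_pred assms(1) by force
  moreover have "y (t+1) \<in> Qcone T F rate (t+1)"
    unfolding Qcone_def
    using u_meas Lset_mono[OF assms(2)] y_pred y_end later_trades assms(1)
    by (intro CollectI conjI exI[of _ y]) auto
  ultimately show thesis
    using first_trade by (intro that[of "y (t+1)" "\<lambda>w. z w - y (t+1) w"]) auto
qed

lemma Qcone_prepend_first_trade:
  fixes F :: "nat \<Rightarrow> 'w::finite set set"
  assumes "t < T" and "sigma_algebra UNIV (F t)"
    and u_Q: "u \<in> Qcone T F rate (t+1)" and u_meas: "u \<in> Lset F t"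
    and k_K: "k \<in> Kcone F rate t"
  shows "(\<lambda>w. u w + k w) \<in> Qcone T F rate t"
proof -
  from u_Q obtain y where
    y_pred: "\<forall>s\<in>{t+2..T}. y s \<in> Lset F (s - 1)" and y_end: "y (T+1) = (\<lambda>w. 0)"
    and first_trade: "(\<lambda>w. u w - y (t+2) w) \<in> Kcone F rate (t+1)"
    and later_trades: "\<forall>s\<in>{t+2..T}. (\<lambda>w. y s w - y (s+1) w) \<in> Kcone F rate s"
    unfolding Qcone_def by (auto simp: add.assoc)
  define y' where "y' = y(t+1 := u)"
  have "(\<lambda>w. u w + k w) \<in> Lset F t"
    using Lset_add[OF assms(2) u_meas] k_K Kcone_subset_Lset by blast
  moreover have "\<forall>s\<in>{t+1..T}. y' s \<in> Lset F (s - 1)"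
    using y_pred u_meas unfolding y'_def by (auto simp: le_Suc_eq)
  moreover have "y' (T+1) = (\<lambda>w. 0)"
    using y_end assms(1) unfolding y'_def by auto
  moreover have "\<forall>s\<in>{t+1..T}. (\<lambda>w. y' s w - y' (s+1) w) \<in> Kcone F rate s"
    using first_trade later_trades unfolding y'_def
    by (auto simp: le_Suc_eq Suc_le_eq)
  ultimately show ?thesis
    using k_K unfolding Qcone_def by (intro CollectI conjI exI[of _ y']) (auto simp: y'_def)
qed

lemma Qcone_recursion:
  fixes F :: "nat \<Rightarrow> 'w::finite set set"
  assumes "t < T" and "sigma_algebra UNIV (F t)" and "F t \<subseteq> F (t+1)"
  shows "Qcone T F rate t =
    {(\<lambda>w. u w + k w) | u k. u \<in> Qcone T F rate (t+1) \<inter> Lset F t \<and> k \<in> Kcone F rate t}"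
  using Qcone_split_first_trade[OF assms(1,3)] Qcone_prepend_first_trade[of t T F, OF assms(1,2)]
  by blast

theorem proposition4p2:
  fixes P :: "'w::finite \<Rightarrow> real"
    and F :: "nat \<Rightarrow> 'w set set"
    and rate :: "nat \<Rightarrow> 'd::finite \<Rightarrow> 'd \<Rightarrow> 'w \<Rightarrow> real"
    and T :: nat
  assumes P_pos: "\<forall>w. P w > 0" and P_sum: "(\<Sum>w\<in>UNIV. P w) = 1"
    and F_sigma: "\<forall>t\<le>T. sigma_algebra UNIV (F t)"
    and F_mono: "\<forall>s t. s \<le> t \<and> t \<le> T \<longrightarrow> F s \<subseteq> F t"
    and F_0: "F 0 = {{}, UNIV}"
    and F_T: "F T = Pow UNIV"
    and pi_pos: "\<forall>t j k w. rate t j k w > 0"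
    and pi_diag: "\<forall>t j w. rate t j j w = 1"
    and pi_meas: "\<forall>t\<le>T. \<forall>j k r. (rate t j k) -` {r} \<in> F t"
    and no_arb: "\<not> (\<exists>y. arbitrage T F rate y)"
  shows "Qcone T F rate T = Kcone F rate T \<and>
    (\<forall>t<T. Qcone T F rate t =
       {(\<lambda>w. u w + k w) | u k. u \<in> Qcone T F rate (t+1) \<inter> Lset F t \<and> k \<in> Kcone F rate t})"
proof (intro conjI allI impI)
  show "Qcone T F rate T = Kcone F rate T"
    by (rule Qcone_terminal)
next
  fix t assume "t < T"
  then show "Qcone T F rate t =
      {(\<lambda>w. u w + k w) | u k. u \<in> Qcone T F rate (t+1) \<inter> Lset F t \<and> k \<in> Kcone F rate t}"
    using F_sigma F_mono by (intro Qcone_recursion) auto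
qed

end
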